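(* For every $n\ge2$ and every $A\subseteq[n]$, $f_n(A)\ge 2f_{n-1}(A)$ and $f_n(A)\ge 2^{n-1}$.
   Context: For $m\ge1$ and a set $B$ of positive integers, $f_m(B)$ denotes the number of linear orders $q$ on $[m]$ such that for every triple $i<j<k$ in $[m]$: if $j\in B$ then $i$ is not ranked last among $\{i,j,k\}$ in $q$, and if $j\notin B$ then $k$ is not ranked first among $\{i,j,k\}$ in $q$. *)

theory Defs
  imports Main
begin

text \<open>A linear order q on [m] = {1..m} is a (reflexive) relation with linear_order_on {1..m} q;
  (x,y) \<in> q means x is ranked no later than y. "i is ranked last among {i,j,k}" means
  (j,i) \<in> q and (k,i) \<in> q; "k is ranked first among {i,j,k}" means (k,i) \<in> q and (k,j) \<in> q.\<close>

definition f :: "nat \<Rightarrow> nat set \<Rightarrow> nat" where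
  "f m B = card {q. linear_order_on {1..m} q \<and>
     (\<forall>i j k. 1 \<le> i \<and> i < j \<and> j < k \<and> k \<le> m \<longrightarrow>
        (j \<in> B \<longrightarrow> \<not> ((j, i) \<in> q \<and> (k, i) \<in> q)) \<and>
        (j \<notin> B \<longrightarrow> \<not> ((k, i) \<in> q \<and> (k, j) \<in> q)))}"

end

theory Submission
  imports Defs "HOL-Combinatorics.Transposition"
begin

text \<open>For \<open>m \<ge> 1\<close> every admissible order on \<open>{1..m}\<close> extends in two different ways to an
  admissible order on \<open>{1..m+1}\<close>: by ranking \<open>m+1\<close> last, and by a second construction
  in which \<open>m+1\<close> is not last. If \<open>m \<in> A\<close>, the second one exchanges the labels \<open>m\<close> and
  \<open>m+1\<close> in the first; if \<open>m \<notin> A\<close>, it inserts \<open>m+1\<close> right next to \<open>m\<close>, so that every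
  new triple \<open>(i, j, m+1)\<close> behaves like the old triple \<open>(i, j, m)\<close>. Both extensions are
  injective, hence \<open>f (m+1) A \<ge> 2 f m A\<close>, and with \<open>f 1 A = 1\<close> this gives \<open>f n A \<ge> 2^(n-1)\<close>.\<close>

definition insert_cut :: "'a set \<Rightarrow> 'a rel \<Rightarrow> 'a set \<Rightarrow> 'a \<Rightarrow> 'a rel" where
  "insert_cut S r D n = r \<union> D \<times> {n} \<union> {n} \<times> (S - D) \<union> {(n, n)}"

lemma in_insert_cut:
  assumes "r \<subseteq> S \<times> S" and "D \<subseteq> S" and "n \<notin> S"
  shows "(a, b) \<in> insert_cut S r D n \<longleftrightarrow>
    (if a = n then b = n \<or> b \<in> S - D else if b = n then a \<in> D else (a, b) \<in> r)"
  using assms by (auto simp: insert_cut_def)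

lemma insert_cut_Int_Times:
  assumes "r \<subseteq> S \<times> S" and "n \<notin> S"
  shows "insert_cut S r D n \<inter> S \<times> S = r"
  using assms by (auto simp: insert_cut_def)

lemma in_insert_cut_after:
  assumes "linear_order_on S r" and "n \<notin> S" and "c \<in> S" and "b \<in> S"
  shows "(n, b) \<in> insert_cut S r {x. (x, c) \<in> r} n \<longleftrightarrow> (c, b) \<in> r \<and> b \<noteq> c"
proof -
  have sub: "r \<subseteq> S \<times> S" and "antisym r" and "total_on S r" and "refl_on S r"
    using assms(1) by (auto simp: order_on_defs)
  have "(n, b) \<in> insert_cut S r {x. (x, c) \<in> r} n \<longleftrightarrow> (b, c) \<notin> r"
    using sub assms(2,4) by (auto simp: insert_cut_def)
  also have "\<dots> \<longleftrightarrow> (c, b) \<in> r \<and> b \<noteq> c"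
    using \<open>antisym r\<close> \<open>total_on S r\<close> \<open>refl_on S r\<close> assms(3,4)
    unfolding total_on_def refl_on_def by (metis antisymD)
  finally show ?thesis .
qed

lemma trans_insert_cut:
  assumes sub: "r \<subseteq> S \<times> S" and tr: "trans r" and tot: "total_on S r"
    and "D \<subseteq> S" and "n \<notin> S" and down: "\<And>x y. (y, x) \<in> r \<Longrightarrow> x \<in> D \<Longrightarrow> y \<in> D"
  shows "trans (insert_cut S r D n)"
proof (rule transI)
  note mem = in_insert_cut[OF sub \<open>D \<subseteq> S\<close> \<open>n \<notin> S\<close>]
  have below: "(x, z) \<in> r" if "x \<in> D" and "z \<in> S - D" for x z
  proof -
    have "x \<noteq> z" "x \<in> S" using that \<open>D \<subseteq> S\<close> by auto
    then have "(x, z) \<in> r \<or> (z, x) \<in> r" using tot that by (auto simp: total_on_def)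
    then show ?thesis using down that by blast
  qed
  fix x y z
  assume xy: "(x, y) \<in> insert_cut S r D n" and yz: "(y, z) \<in> insert_cut S r D n"
  consider "y = n" | "x = n" "y \<noteq> n" | "x \<noteq> n" "y \<noteq> n"
    by blast
  then show "(x, z) \<in> insert_cut S r D n"
  proof cases
    case 1
    then show ?thesis using xy yz below \<open>n \<notin> S\<close> unfolding mem by (auto split: if_splits)
  next
    case 2
    then have "y \<in> S - D" using xy unfolding mem by simp
    then have "z \<noteq> n" "(y, z) \<in> r" using yz 2 unfolding mem by (auto split: if_splits)
    then have "z \<in> S - D" using sub down \<open>y \<in> S - D\<close> by blast
    then show ?thesis using 2 \<open>z \<noteq> n\<close> unfolding mem by simp
  next
    case 3
    then have "(x, y) \<in> r" using xy unfolding mem by simp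
    show ?thesis
    proof (cases "z = n")
      case True
      then show ?thesis using 3 yz down \<open>(x, y) \<in> r\<close> unfolding mem by auto
    next
      case False
      then have "(y, z) \<in> r" using 3 yz unfolding mem by simp
      then show ?thesis using False 3 transD[OF tr \<open>(x, y) \<in> r\<close>] unfolding mem by simp
    qed
  qed
qed

lemma linear_order_on_insert_cut:
  assumes lin: "linear_order_on S r" and "D \<subseteq> S" and "n \<notin> S"
    and down: "\<And>x y. (y, x) \<in> r \<Longrightarrow> x \<in> D \<Longrightarrow> y \<in> D"
  shows "linear_order_on (insert n S) (insert_cut S r D n)"
proof -
  have sub: "r \<subseteq> S \<times> S" and "refl_on S r" and "trans r" and "antisym r"
    and tot: "total_on S r"
    using lin by (auto simp: order_on_defs)
  note mem = in_insert_cut[OF sub \<open>D \<subseteq> S\<close> \<open>n \<notin> S\<close>]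
  have "trans (insert_cut S r D n)"
    using trans_insert_cut[OF sub \<open>trans r\<close> tot \<open>D \<subseteq> S\<close> \<open>n \<notin> S\<close> down] .
  moreover have "insert_cut S r D n \<subseteq> insert n S \<times> insert n S"
    using sub \<open>D \<subseteq> S\<close> by (auto simp: insert_cut_def)
  moreover have "refl_on (insert n S) (insert_cut S r D n)"
    using \<open>refl_on S r\<close> by (auto simp: refl_on_def insert_cut_def)
  moreover have "antisym (insert_cut S r D n)"
    using \<open>antisym r\<close> sub unfolding antisym_def mem by (auto split: if_splits)
  moreover have "total_on (insert n S) (insert_cut S r D n)"
    using tot unfolding total_on_def mem by auto
  ultimately show ?thesis
    unfolding order_on_defs by blast
qed

lemma linear_order_on_inv_image:
  assumes lin: "linear_order_on S r" and inv: "\<And>x. g (g x) = x" and "g ` S \<subseteq> S"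
  shows "linear_order_on S (inv_image r g)"
proof -
  have mem: "g x \<in> S \<longleftrightarrow> x \<in> S" for x
    using \<open>g ` S \<subseteq> S\<close> inv by (metis image_subset_iff)
  have "inj g"
    using inv by (metis injI)
  have "inv_image r g \<subseteq> S \<times> S"
    using lin by (auto simp: order_on_defs mem)
  moreover have "refl_on S (inv_image r g)"
    using lin by (auto simp: order_on_defs refl_on_def mem)
  moreover have "trans (inv_image r g)"
    using lin by (simp add: order_on_defs trans_inv_image)
  moreover have "antisym (inv_image r g)"
    using lin \<open>inj g\<close> by (auto simp: order_on_defs antisym_def dest: injD)
  moreover have "total_on S (inv_image r g)"
    using lin unfolding order_on_defs total_on_def in_inv_image by (metis mem inv)
  ultimately show ?thesis
    unfolding order_on_defs by blast
qed

lemma two_mul_card_le_of_disjoint_images: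
  assumes "finite W" and "inj_on g X" and "inj_on h X" and "g ` X \<subseteq> W" and "h ` X \<subseteq> W"
    and "g ` X \<inter> h ` X = {}"
  shows "2 * card X \<le> card W"
proof -
  have "finite (g ` X)" "finite (h ` X)"
    using assms(1,4,5) finite_subset by auto
  then have "2 * card X = card (g ` X \<union> h ` X)"
    using assms(2,3,6) by (simp add: card_Un_disjoint card_image)
  also have "\<dots> \<le> card W"
    using assms(1,4,5) by (simp add: card_mono)
  finally show ?thesis .
qed

definition good_triple :: "nat set \<Rightarrow> nat rel \<Rightarrow> nat \<Rightarrow> nat \<Rightarrow> nat \<Rightarrow> bool" where
  "good_triple B q i j k \<longleftrightarrow>
     (j \<in> B \<longrightarrow> \<not> ((j, i) \<in> q \<and> (k, i) \<in> q)) \<and> (j \<notin> B \<longrightarrow> \<not> ((k, i) \<in> q \<and> (k, j) \<in> q))"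

definition admissible :: "nat \<Rightarrow> nat set \<Rightarrow> nat rel \<Rightarrow> bool" where
  "admissible m B q \<longleftrightarrow>
     (\<forall>i j k. 1 \<le> i \<and> i < j \<and> j < k \<and> k \<le> m \<longrightarrow> good_triple B q i j k)"

definition admissible_orders :: "nat \<Rightarrow> nat set \<Rightarrow> nat rel set" where
  "admissible_orders m B = {q. linear_order_on {1..m} q \<and> admissible m B q}"

lemma f_eq_card_admissible_orders: "f m B = card (admissible_orders m B)"
  by (simp add: f_def admissible_orders_def admissible_def good_triple_def)

lemma admissible_ordersD:
  assumes "q \<in> admissible_orders m B"
  shows "linear_order_on {1..m} q" and "q \<subseteq> {1..m} \<times> {1..m}" and "admissible m B q"
  using assms by (auto simp: admissible_orders_def order_on_defs)

lemma finite_admissible_orders: "finite (admissible_orders m B)"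
proof (rule finite_subset)
  show "admissible_orders m B \<subseteq> Pow ({1..m} \<times> {1..m})"
    using admissible_ordersD(2) by blast
qed simp

lemma good_triple_inv_image:
  "g i = i \<Longrightarrow> g j = j \<Longrightarrow> good_triple B (inv_image r g) i j k \<longleftrightarrow> good_triple B r i j (g k)"
  by (simp add: good_triple_def)

lemma insert_cut_in_admissible_orders:
  assumes q: "q \<in> admissible_orders m B" and "D \<subseteq> {1..m}"
    and down: "\<And>x y. (y, x) \<in> q \<Longrightarrow> x \<in> D \<Longrightarrow> y \<in> D"
    and top: "\<And>i j. 1 \<le> i \<Longrightarrow> i < j \<Longrightarrow> j \<le> m \<Longrightarrow>
      good_triple B (insert_cut {1..m} q D (Suc m)) i j (Suc m)"
  shows "insert_cut {1..m} q D (Suc m) \<in> admissible_orders (Suc m) B"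
proof -
  let ?p = "insert_cut {1..m} q D (Suc m)"
  note q' = admissible_ordersD[OF q]
  have "linear_order_on {1..Suc m} ?p"
    using linear_order_on_insert_cut[OF q'(1) \<open>D \<subseteq> {1..m}\<close> _ down]
    by (simp add: atLeastAtMostSuc_conv)
  moreover have "admissible (Suc m) B ?p"
    unfolding admissible_def
  proof (intro allI impI)
    fix i j k
    assume ijk: "1 \<le> i \<and> i < j \<and> j < k \<and> k \<le> Suc m"
    show "good_triple B ?p i j k"
    proof (cases "k = Suc m")
      case True
      then show ?thesis using top ijk by simp
    next
      case False
      then have "good_triple B q i j k"
        using q'(3) ijk unfolding admissible_def by simp
      moreover have "(a, b) \<in> ?p \<longleftrightarrow> (a, b) \<in> q" if "a \<in> {i, j, k}" and "b \<in> {i, j, k}" for a b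
        using that ijk False in_insert_cut[OF q'(2) \<open>D \<subseteq> {1..m}\<close>, of "Suc m" a b] by auto
      ultimately show ?thesis
        unfolding good_triple_def by simp
    qed
  qed
  ultimately show ?thesis
    by (simp add: admissible_orders_def)
qed

definition put_last :: "nat \<Rightarrow> nat rel \<Rightarrow> nat rel" where
  "put_last m q = insert_cut {1..m} q {1..m} (Suc m)"

lemma in_put_last_Suc: "y \<in> {1..m} \<Longrightarrow> (y, Suc m) \<in> put_last m q"
  by (simp add: put_last_def insert_cut_def)

lemma Suc_in_put_last_iff: "q \<subseteq> {1..m} \<times> {1..m} \<Longrightarrow> (Suc m, b) \<in> put_last m q \<longleftrightarrow> b = Suc m"
  by (auto simp: put_last_def insert_cut_def)

lemma put_last_in_admissible_orders:
  assumes "q \<in> admissible_orders m B"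
  shows "put_last m q \<in> admissible_orders (Suc m) B"
  unfolding put_last_def
proof (rule insert_cut_in_admissible_orders[OF assms])
  fix i j
  assume "1 \<le> i" and "i < j" and "j \<le> m"
  then have "(Suc m, i) \<notin> put_last m q"
    using Suc_in_put_last_iff[OF admissible_ordersD(2)[OF assms]] by simp
  then show "good_triple B (insert_cut {1..m} q {1..m} (Suc m)) i j (Suc m)"
    unfolding good_triple_def put_last_def by blast
qed (use admissible_ordersD(2)[OF assms] in auto)

lemma inj_on_put_last: "inj_on (put_last m) (admissible_orders m B)"
proof (rule inj_on_inverseI)
  fix q
  assume "q \<in> admissible_orders m B"
  then show "put_last m q \<inter> {1..m} \<times> {1..m} = q"
    unfolding put_last_def by (intro insert_cut_Int_Times admissible_ordersD(2)) auto
qed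

text \<open>The label \<open>m\<close> moves to the end and \<open>Suc m\<close> takes over its old position. For \<open>m \<in> B\<close> this
  keeps admissibility because the condition on a triple \<open>i < j < k\<close> involves \<open>k\<close> only through
  its rank, so \<open>k\<close> may be replaced by any other element above \<open>j\<close>.\<close>

definition put_last_swapped :: "nat \<Rightarrow> nat rel \<Rightarrow> nat rel" where
  "put_last_swapped m q = inv_image (put_last m q) (transpose m (Suc m))"

lemma put_last_swapped_in_admissible_orders:
  assumes q: "q \<in> admissible_orders m B" and "m \<in> B" and "1 \<le> m"
  shows "put_last_swapped m q \<in> admissible_orders (Suc m) B"
proof -
  let ?\<tau> = "transpose m (Suc m)"
  note p = admissible_ordersD[OF put_last_in_admissible_orders[OF q]]
  have "linear_order_on {1..Suc m} (put_last_swapped m q)"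
    unfolding put_last_swapped_def
    using p(1) \<open>1 \<le> m\<close> by (intro linear_order_on_inv_image) auto
  moreover have "admissible (Suc m) B (put_last_swapped m q)"
    unfolding admissible_def
  proof (intro allI impI)
    fix i j k
    assume ijk: "1 \<le> i \<and> i < j \<and> j < k \<and> k \<le> Suc m"
    show "good_triple B (put_last_swapped m q) i j k"
    proof (cases "j = m")
      case True
      have "(Suc m, i) \<notin> put_last m q"
        using Suc_in_put_last_iff[OF admissible_ordersD(2)[OF q]] ijk by simp
      then show ?thesis
        using True ijk \<open>m \<in> B\<close> by (simp add: good_triple_def put_last_swapped_def)
    next
      case False
      then have "j < ?\<tau> k" and "?\<tau> k \<le> Suc m" and "?\<tau> i = i" and "?\<tau> j = j"
        using ijk by (auto simp: transpose_def)
      then show ?thesis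
        using p(3) ijk unfolding admissible_def put_last_swapped_def
        by (simp add: good_triple_inv_image)
    qed
  qed
  ultimately show ?thesis
    by (simp add: admissible_orders_def)
qed

lemma inj_on_put_last_swapped: "inj_on (put_last_swapped m) (admissible_orders m B)"
proof -
  have "put_last m q = inv_image (put_last_swapped m q) (transpose m (Suc m))" for q
    by (auto simp: put_last_swapped_def)
  then show ?thesis
    using inj_on_put_last by (metis inj_on_def)
qed

lemma put_last_swapped_not_last:
  "q \<subseteq> {1..m} \<times> {1..m} \<Longrightarrow> (m, Suc m) \<notin> put_last_swapped m q"
  by (simp add: put_last_swapped_def Suc_in_put_last_iff)

lemma insert_before_last_in_admissible_orders:
  assumes q: "q \<in> admissible_orders m B" and last: "\<forall>y\<in>{1..m}. (y, m) \<in> q"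
  shows "insert_cut {1..m} q {1..<m} (Suc m) \<in> admissible_orders (Suc m) B"
proof (rule insert_cut_in_admissible_orders[OF q])
  note q' = admissible_ordersD[OF q]
  fix x y
  assume yx: "(y, x) \<in> q" and x: "x \<in> {1..<m}"
  have "y \<noteq> m"
  proof
    assume "y = m"
    moreover have "(x, m) \<in> q"
      using last x by simp
    ultimately show False
      using yx x q'(1) by (auto simp: order_on_defs dest: antisymD)
  qed
  then show "y \<in> {1..<m}"
    using yx q'(2) by auto
next
  fix i j
  assume "1 \<le> i" and "i < j" and "j \<le> m"
  then have "(Suc m, i) \<notin> insert_cut {1..m} q {1..<m} (Suc m)"
    using admissible_ordersD(2)[OF q] by (auto simp: insert_cut_def)
  then show "good_triple B (insert_cut {1..m} q {1..<m} (Suc m)) i j (Suc m)"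
    unfolding good_triple_def by blast
qed auto

lemma insert_after_in_admissible_orders:
  assumes q: "q \<in> admissible_orders m B" and "m \<notin> B" and "1 \<le> m"
  shows "insert_cut {1..m} q {x. (x, m) \<in> q} (Suc m) \<in> admissible_orders (Suc m) B"
proof (rule insert_cut_in_admissible_orders[OF q])
  let ?p = "insert_cut {1..m} q {x. (x, m) \<in> q} (Suc m)"
  note q' = admissible_ordersD[OF q]
  show "{x. (x, m) \<in> q} \<subseteq> {1..m}"
    using q'(2) by auto
  show "y \<in> {x. (x, m) \<in> q}" if "(y, x) \<in> q" and "x \<in> {x. (x, m) \<in> q}" for x y
    using that q'(1) by (auto simp: order_on_defs dest: transD)
  fix i j
  assume ij: "1 \<le> i" "i < j" "j \<le> m"
  have after_m: "(Suc m, b) \<in> ?p \<longleftrightarrow> (m, b) \<in> q \<and> b \<noteq> m" if "b \<in> {1..m}" for b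
    using in_insert_cut_after[OF q'(1) _ _ that] \<open>1 \<le> m\<close> by simp
  show "good_triple B ?p i j (Suc m)"
  proof (cases "j = m")
    case True
    then show ?thesis
      using after_m[of m] \<open>m \<notin> B\<close> \<open>1 \<le> m\<close> by (simp add: good_triple_def)
  next
    case False
    then have "good_triple B q i j m"
      using q'(3) ij unfolding admissible_def by simp
    moreover have "(j, i) \<in> ?p \<longleftrightarrow> (j, i) \<in> q"
      using ij q'(2) by (auto simp: insert_cut_def)
    ultimately show ?thesis
      using after_m[of i] after_m[of j] ij False by (simp add: good_triple_def)
  qed
qed

text \<open>\<open>Suc m\<close> goes directly after \<open>m\<close>, or directly before \<open>m\<close> if \<open>m\<close> is ranked last
  (directly after would reproduce \<^const>\<open>put_last\<close>).\<close>

definition cut_beside :: "nat \<Rightarrow> nat rel \<Rightarrow> nat set" where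
  "cut_beside m q = (if \<forall>y\<in>{1..m}. (y, m) \<in> q then {1..<m} else {x. (x, m) \<in> q})"

definition put_beside :: "nat \<Rightarrow> nat rel \<Rightarrow> nat rel" where
  "put_beside m q = insert_cut {1..m} q (cut_beside m q) (Suc m)"

lemma put_beside_in_admissible_orders:
  assumes "q \<in> admissible_orders m B" and "m \<notin> B" and "1 \<le> m"
  shows "put_beside m q \<in> admissible_orders (Suc m) B"
  using insert_before_last_in_admissible_orders[OF assms(1)]
    insert_after_in_admissible_orders[OF assms]
  by (simp add: put_beside_def cut_beside_def)

lemma inj_on_put_beside: "inj_on (put_beside m) (admissible_orders m B)"
proof (rule inj_on_inverseI)
  fix q
  assume "q \<in> admissible_orders m B"
  then show "put_beside m q \<inter> {1..m} \<times> {1..m} = q"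
    unfolding put_beside_def by (intro insert_cut_Int_Times admissible_ordersD(2)) auto
qed

lemma put_beside_not_last:
  assumes "q \<subseteq> {1..m} \<times> {1..m}" and "1 \<le> m"
  shows "\<exists>y\<in>{1..m}. (y, Suc m) \<notin> put_beside m q"
proof -
  have "cut_beside m q \<subseteq> {1..m}"
    using assms(1) by (auto simp: cut_beside_def)
  moreover have "\<exists>y\<in>{1..m}. y \<notin> cut_beside m q"
    using assms(2) by (auto simp: cut_beside_def)
  ultimately show ?thesis
    unfolding put_beside_def using in_insert_cut[OF assms(1)] by auto
qed

lemma card_admissible_orders_Suc:
  assumes "1 \<le> m"
  shows "2 * card (admissible_orders m B) \<le> card (admissible_orders (Suc m) B)"
proof -
  let ?X = "admissible_orders m B"
  define alt where "alt = (if m \<in> B then put_last_swapped m else put_beside m)"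
  have "alt ` ?X \<subseteq> admissible_orders (Suc m) B"
    using put_last_swapped_in_admissible_orders put_beside_in_admissible_orders assms
    by (auto simp: alt_def)
  moreover have "inj_on alt ?X"
    using inj_on_put_last_swapped inj_on_put_beside by (simp add: alt_def)
  moreover have "\<not> (\<forall>y\<in>{1..m}. (y, Suc m) \<in> alt q)" if "q \<in> ?X" for q
  proof (cases "m \<in> B")
    case True
    then show ?thesis
      using put_last_swapped_not_last[OF admissible_ordersD(2)[OF that]] assms
      by (auto simp: alt_def)
  next
    case False
    then show ?thesis
      using put_beside_not_last[OF admissible_ordersD(2)[OF that] assms] by (auto simp: alt_def)
  qed
  then have "put_last m ` ?X \<inter> alt ` ?X = {}"
    using in_put_last_Suc by blast
  moreover have "put_last m ` ?X \<subseteq> admissible_orders (Suc m) B"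
    using put_last_in_admissible_orders by blast
  ultimately show ?thesis
    using two_mul_card_le_of_disjoint_images[OF finite_admissible_orders inj_on_put_last]
    by simp
qed

lemma card_admissible_orders_ge_power:
  assumes "1 \<le> n"
  shows "2 ^ (n - 1) \<le> card (admissible_orders n B)"
  using assms
proof (induction n rule: dec_induct)
  case base
  have "{(1, 1)} \<in> admissible_orders 1 B"
    by (auto simp: admissible_orders_def admissible_def order_on_defs refl_on_def antisym_def
        trans_def total_on_def)
  then show ?case
    using finite_admissible_orders by (auto simp: Suc_le_eq card_gt_0_iff)
next
  case (step m)
  then have "2 ^ (Suc m - 1) \<le> 2 * card (admissible_orders m B)"
    by (cases m) auto
  also have "\<dots> \<le> card (admissible_orders (Suc m) B)"
    using card_admissible_orders_Suc step.hyps(1) by blast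
  finally show ?case .
qed

theorem corollary1:
  fixes n :: nat and A :: "nat set"
  assumes "n \<ge> 2" and "A \<subseteq> {1..n}"
  shows "f n A \<ge> 2 * f (n - 1) A \<and> f n A \<ge> 2 ^ (n - 1)"
proof -
  obtain m where "n = Suc m" and "1 \<le> m"
    using assms(1) by (cases n) auto
  then show ?thesis
    using card_admissible_orders_Suc card_admissible_orders_ge_power[of n A]
    by (simp add: f_eq_card_admissible_orders)
qed

end
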